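(* For every $p,p'\in(0,1]$, $\mathbf{C}_p(\mathbb{C}^3)=\mathbf{C}_{p'}(\mathbb{C}^3)$; and for every $p'\in(1,\infty)$ and $p\in(0,p')$, $\mathbf{C}_p(\mathbb{C}^3)\subseteq\mathbf{C}_{p'}(\mathbb{C}^3)$ and $\mathbf{C}_p(\mathbb{C}^3)\not\supseteq\mathbf{C}_{p'}(\mathbb{C}^3)$.
   Context: Observables are self-adjoint operators on $\mathbb{C}^3$; $A^T$ denotes the transpose, acting on the dual space, $(A^T\eta)(\varphi)=\eta(A\varphi)$. For a finite collection $\mathcal{A}=\{A_1,\dots,A_K\}$ of observables and $0<p<\infty$, $C_{\mathcal{A},p}=\sum_{k=1}^K|A_k\otimes I^T-I\otimes A_k^T|^p$, and $\mathbf{C}_p(\mathcal{H})=\{C_{\mathcal{A},p}:\ \mathcal{A}\text{ a finite collection of observables each with finite spectrum}\}$. *)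

theory Defs
  imports "HOL-Analysis.Analysis"
begin

text \<open>Operators on C^3 are 3x3 complex matrices (w.r.t. the standard basis);
operators on C^3 tensor (C^3)^* are matrices indexed by pairs (i,j), using the
product basis e_i tensor e_j^* (e_j^* the dual basis).\<close>

type_synonym op3 = "complex ^ 3 ^ 3"
type_synonym op33 = "complex ^ (3 \<times> 3) ^ (3 \<times> 3)"

definition adjoint_mat :: "complex ^ 'n ^ 'n \<Rightarrow> complex ^ 'n ^ 'n" where
  "adjoint_mat A = (\<chi> i j. cnj (A $ j $ i))"

definition self_adjoint :: "complex ^ 'n ^ 'n \<Rightarrow> bool" where
  "self_adjoint A \<longleftrightarrow> adjoint_mat A = A"

definition spectrum_mat :: "complex ^ 'n ^ 'n \<Rightarrow> complex set" where
  "spectrum_mat A = {c. \<exists>v. v \<noteq> 0 \<and> A *v v = c *s v}"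

definition kron :: "complex ^ 'n ^ 'n \<Rightarrow> complex ^ 'm ^ 'm \<Rightarrow> complex ^ ('n \<times> 'm) ^ ('n \<times> 'm)" where
  "kron A B = (\<chi> r s. A $ fst r $ fst s * B $ snd r $ snd s)"

text \<open>In the dual basis, the transpose A^T acting on the dual space has matrix transpose A.\<close>
definition comm_op :: "op3 \<Rightarrow> op33" where
  "comm_op A = kron A (mat 1) - kron (mat 1) (transpose A)"

text \<open>Functional calculus |X|^p for a self-adjoint (hence diagonalizable) X:
the operator acting as |\<lambda>|^p on each eigenspace of X (eigenvalue \<lambda>).\<close>
definition abs_powr :: "real \<Rightarrow> complex ^ 'n ^ 'n \<Rightarrow> complex ^ 'n ^ 'n" where
  "abs_powr p X = (THE M. \<forall>c v. X *v v = c *s v \<longrightarrow> M *v v = complex_of_real (cmod c powr p) *s v)"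

definition C_op :: "real \<Rightarrow> op3 list \<Rightarrow> op33" where
  "C_op p As = sum_list (map (\<lambda>A. abs_powr p (comm_op A)) As)"

definition C_set :: "real \<Rightarrow> op33 set" where
  "C_set p = {C_op p As | As. \<forall>A \<in> set As. self_adjoint A \<and> finite (spectrum_mat A)}"

end

(* Write an observable as A = U diag(d) U^*. Then A (x) I - I (x) A^T is diagonal in the
   product basis built from U and its complex conjugate, with eigenvalues d_i - d_j, so
   |A (x) I - I (x) A^T|^p has eigenvalues |d_i - d_j|^p there.

   Inclusion: it suffices that each gap triple (|d1 - d2|^p, |d1 - d3|^p, |d2 - d3|^p) is a
   finite sum of gap triples of exponent p'. For p <= 1 it satisfies the triangle
   inequalities, and every such triple is a sum of degenerate ones (s, s, 0); for
   1 < p <= p' the intermediate value theorem produces a decomposition.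

   Non-inclusion: averaging |x - z|^p <= K_p (|x - y|^p + |y - z|^p), K_p = max 1 2^(p-1),
   against the probability weights |U_ik|^2 shows that X_{13,13} - K_p (X_{12,12} + X_{23,23})
   is nonpositive on C_p, whereas for the eigenvalues 0, 1, 2 and exponent p' it equals
   2^p' - 2 K_p > 0. *)

theory Submission
  imports Defs
begin

section \<open>Complex inner product and the Rayleigh principle\<close>

definition cinner :: "complex^'n \<Rightarrow> complex^'n \<Rightarrow> complex" where
  "cinner x y = (\<Sum>i\<in>UNIV. cnj (x$i) * y$i)"

lemma cinner_add_left: "cinner (x + y) z = cinner x z + cinner y z"
  by (simp add: cinner_def distrib_right sum.distrib)

lemma cinner_add_right: "cinner x (y + z) = cinner x y + cinner x z"
  by (simp add: cinner_def distrib_left sum.distrib)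

lemma cinner_diff_right: "cinner x (y - z) = cinner x y - cinner x z"
  by (simp add: cinner_def right_diff_distrib sum_subtractf)

lemma cinner_scale_left: "cinner (c *s x) y = cnj c * cinner x y"
  by (simp add: cinner_def sum_distrib_left algebra_simps)

lemma cinner_scale_right: "cinner x (c *s y) = c * cinner x y"
  by (simp add: cinner_def sum_distrib_left algebra_simps)

lemma cinner_cnj: "cnj (cinner x y) = cinner y x"
  by (simp add: cinner_def mult.commute)

lemma cinner_self: "cinner x x = of_real ((norm x)\<^sup>2)"
proof -
  have "cnj (x$i) * x$i = of_real ((cmod (x$i))\<^sup>2)" for i
    by (metis complex_norm_square mult.commute of_real_power)
  then show ?thesis
    by (simp add: cinner_def norm_vec_def L2_set_def sum_nonneg)
qed

lemma cinner_self_eq_0: "cinner x x = 0 \<longleftrightarrow> x = 0"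
  by (simp add: cinner_self)

lemma cinner_adjoint_mat: "cinner (A *v x) y = cinner x (adjoint_mat A *v y)"
proof -
  have "cinner (A *v x) y = (\<Sum>i\<in>UNIV. \<Sum>j\<in>UNIV. cnj (A$i$j) * cnj (x$j) * y$i)"
    by (simp add: cinner_def matrix_vector_mult_def sum_distrib_right)
  also have "\<dots> = (\<Sum>j\<in>UNIV. \<Sum>i\<in>UNIV. cnj (A$i$j) * cnj (x$j) * y$i)"
    by (rule sum.swap)
  also have "\<dots> = cinner x (adjoint_mat A *v y)"
    by (simp add: cinner_def matrix_vector_mult_def adjoint_mat_def sum_distrib_left algebra_simps)
  finally show ?thesis .
qed

lemma self_adjoint_cinner: "self_adjoint A \<Longrightarrow> cinner (A *v x) y = cinner x (A *v y)"
  by (simp add: cinner_adjoint_mat self_adjoint_def)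

lemma scaleR_eq_vector_smult: "r *\<^sub>R (x::complex^'n) = complex_of_real r *s x"
  by (simp add: vec_eq_iff) (simp add: scaleR_conv_of_real)

lemma linear_le_quadratic_imp_zero:
  fixes r c :: real
  assumes le: "\<And>t. 2 * t * r \<le> t\<^sup>2 * c"
  shows "r = 0"
proof -
  define q where "q = \<bar>c\<bar> + 1"
  have q: "q > 0" "2 * q - c > 0"
    by (auto simp: q_def)
  have "2 * (r / q) * r * q\<^sup>2 \<le> (r / q)\<^sup>2 * c * q\<^sup>2"
    using le[of "r / q"] by (rule mult_right_mono) simp
  then have "r\<^sup>2 * (2 * q - c) \<le> 0"
    using q by (simp add: power2_eq_square field_simps)
  with q have "r\<^sup>2 \<le> 0"
    by (simp add: mult_le_0_iff)
  then show ?thesis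
    by simp
qed

text \<open>Perturb \<open>v\<close> to \<open>v + t w\<close> and renormalise: maximality gives
  \<open>2 t Re \<langle>w, A v\<rangle> \<le> c t\<^sup>2\<close> for every real \<open>t\<close>.\<close>
lemma rayleigh_max_stationary_Re:
  fixes A :: "complex^'n^'n"
  assumes sa: "self_adjoint A"
    and v: "norm v = 1" "\<forall>u\<in>F. cinner u v = 0"
    and max: "\<And>y. norm y = 1 \<Longrightarrow> \<forall>u\<in>F. cinner u y = 0 \<Longrightarrow>
                   Re (cinner y (A *v y)) \<le> Re (cinner v (A *v v))"
    and w: "\<forall>u\<in>F. cinner u w = 0" "cinner v w = 0"
  shows "Re (cinner w (A *v v)) = 0"
proof (rule linear_le_quadratic_imp_zero)
  define f where "f y = Re (cinner y (A *v y))" for y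
  fix t :: real
  define x where "x = v + of_real t *s w"
  have wv: "cinner w v = 0"
    using w(2) cinner_cnj[of v w] by simp
  have "cinner x x = cinner v v + of_real t * of_real t * cinner w w"
    using w(2) wv by (simp add: x_def cinner_add_left cinner_add_right cinner_scale_left
        cinner_scale_right algebra_simps)
  then have "complex_of_real ((norm x)\<^sup>2) = complex_of_real (1 + t\<^sup>2 * (norm w)\<^sup>2)"
    using v(1) by (simp add: cinner_self power2_eq_square)
  then have nx: "(norm x)\<^sup>2 = 1 + t\<^sup>2 * (norm w)\<^sup>2"
    by (simp only: of_real_eq_iff)
  then have nx_pos: "(norm x)\<^sup>2 > 0"
    by (simp add: add_pos_nonneg)
  have "f ((1 / norm x) *\<^sub>R x) \<le> f v"
    unfolding f_def
  proof (rule max)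
    show "norm ((1 / norm x) *\<^sub>R x) = 1"
      using nx_pos by auto
    show "\<forall>u\<in>F. cinner u ((1 / norm x) *\<^sub>R x) = 0"
      using v(2) w(1) by (simp add: scaleR_eq_vector_smult cinner_scale_right x_def cinner_add_right)
  qed
  then have "f x / (norm x)\<^sup>2 \<le> f v"
    by (simp add: f_def scaleR_eq_vector_smult vector_scalar_commute cinner_scale_left
        cinner_scale_right power2_eq_square)
  then have le: "f x \<le> f v * (1 + t\<^sup>2 * (norm w)\<^sup>2)"
    using nx_pos nx by (simp add: divide_le_eq)
  have "cinner v (A *v w) = cnj (cinner w (A *v v))"
    by (metis sa self_adjoint_cinner cinner_cnj)
  then have "f x = f v + 2 * t * Re (cinner w (A *v v)) + t\<^sup>2 * f w"
    by (simp add: f_def x_def vector_scalar_commute cinner_add_left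
        cinner_add_right cinner_scale_left cinner_scale_right algebra_simps power2_eq_square)
  with le show "2 * t * Re (cinner w (A *v v)) \<le> t\<^sup>2 * (f v * (norm w)\<^sup>2 - f w)"
    by (simp add: algebra_simps)
qed

lemma rayleigh_max_stationary:
  fixes A :: "complex^'n^'n"
  assumes sa: "self_adjoint A"
    and v: "norm v = 1" "\<forall>u\<in>F. cinner u v = 0"
    and max: "\<And>y. norm y = 1 \<Longrightarrow> \<forall>u\<in>F. cinner u y = 0 \<Longrightarrow>
                   Re (cinner y (A *v y)) \<le> Re (cinner v (A *v v))"
    and w: "\<forall>u\<in>F. cinner u w = 0" "cinner v w = 0"
  shows "cinner w (A *v v) = 0"
proof -
  have "Re (cinner w (A *v v)) = 0" "Re (cinner (\<i> *s w) (A *v v)) = 0"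
    using w by (auto intro: rayleigh_max_stationary_Re[OF sa v max] simp: cinner_scale_right)
  then show ?thesis
    by (simp add: cinner_scale_left complex_eq_iff)
qed

lemma rayleigh_max_exists:
  fixes A :: "complex^'n^'n"
  assumes w0: "w0 \<noteq> 0" "\<forall>u\<in>F. cinner u w0 = 0"
  obtains v where "norm v = 1" "\<forall>u\<in>F. cinner u v = 0"
    "\<And>y. norm y = 1 \<Longrightarrow> \<forall>u\<in>F. cinner u y = 0 \<Longrightarrow>
          Re (cinner y (A *v y)) \<le> Re (cinner v (A *v v))"
proof -
  define K where "K = {v::complex^'n. norm v = 1 \<and> (\<forall>u\<in>F. cinner u v = 0)}"
  have closed_orth: "closed {v::complex^'n. cinner u v = 0}" for u
    unfolding cinner_def by (intro closed_Collect_eq continuous_intros)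
  have "K = sphere 0 1 \<inter> (\<Inter>u\<in>F. {v. cinner u v = 0})"
    unfolding K_def by auto
  then have "compact K"
    by (simp add: compact_Int_closed closed_INT closed_orth)
  moreover have "(1 / norm w0) *\<^sub>R w0 \<in> K"
    using w0 by (simp add: K_def) (simp add: scaleR_eq_vector_smult cinner_scale_right)
  moreover have "continuous_on K (\<lambda>y. Re (cinner y (A *v y)))"
    unfolding cinner_def matrix_vector_mult_def by (intro continuous_intros)
  ultimately obtain v where "v \<in> K" "\<And>y. y \<in> K \<Longrightarrow> Re (cinner y (A *v y)) \<le> Re (cinner v (A *v v))"
    using continuous_attains_sup[of K] by blast
  then show thesis
    by (intro that) (auto simp: K_def)
qed

text \<open>The maximiser of the quadratic form on the unit sphere of the orthogonal complement of
  a family of eigenvectors is itself an eigenvector: \<open>A v - \<langle>v, A v\<rangle> v\<close> is orthogonal to that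
  complement by stationarity and to the family by self-adjointness, hence to itself.\<close>
lemma self_adjoint_eigenvector_orthogonal:
  fixes A :: "complex^'n^'n"
  assumes sa: "self_adjoint A"
    and F: "\<forall>u\<in>F. \<exists>m::real. A *v u = of_real m *s u"
    and w0: "w0 \<noteq> 0" "\<forall>u\<in>F. cinner u w0 = 0"
  obtains v m where "norm v = 1" "\<forall>u\<in>F. cinner u v = 0" "A *v v = of_real m *s v"
proof -
  obtain v where v: "norm v = 1" "\<forall>u\<in>F. cinner u v = 0"
    and max: "\<And>y. norm y = 1 \<Longrightarrow> \<forall>u\<in>F. cinner u y = 0 \<Longrightarrow>
                   Re (cinner y (A *v y)) \<le> Re (cinner v (A *v v))"
    using rayleigh_max_exists[OF w0] by blast
  define c where "c = cinner v (A *v v)"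
  define z where "z = A *v v - c *s v"
  have vv: "cinner v v = 1"
    using v(1) by (simp add: cinner_self)
  have zF: "\<forall>u\<in>F. cinner u z = 0"
  proof
    fix u assume u: "u \<in> F"
    then obtain m :: real where "A *v u = of_real m *s u"
      using F by blast
    then have "cinner u (A *v v) = 0"
      using u v(2) by (metis self_adjoint_cinner[OF sa] cinner_scale_left mult_zero_right)
    then show "cinner u z = 0"
      using u v(2) by (simp add: z_def cinner_diff_right cinner_scale_right)
  qed
  have zv: "cinner v z = 0" "cinner z v = 0"
    using cinner_cnj[of v z] by (simp_all add: z_def cinner_diff_right cinner_scale_right vv c_def)
  have "cinner z z = cinner z (A *v v) - c * cinner z v"
    by (subst (2) z_def) (simp add: cinner_diff_right cinner_scale_right)
  then have "z = 0"
    using rayleigh_max_stationary[OF sa v max zF zv(1)] zv(2) by (simp add: cinner_self_eq_0)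
  then have Av: "A *v v = c *s v"
    by (simp add: z_def)
  have "cnj c = c"
    unfolding c_def by (metis cinner_cnj self_adjoint_cinner[OF sa])
  then have "c = of_real (Re c)"
    by (simp add: complex_eq_iff)
  with Av show thesis
    using that v by metis
qed

section \<open>Unitarily diagonalised matrices\<close>

definition diag_mat :: "('n \<Rightarrow> complex) \<Rightarrow> complex^'n^'n" where
  "diag_mat l = (\<chi> i j. if i = j then l i else 0)"

definition unitary :: "complex^'n^'n \<Rightarrow> bool" where
  "unitary U \<longleftrightarrow> adjoint_mat U ** U = mat 1 \<and> U ** adjoint_mat U = mat 1"

definition spectral_mat :: "complex^'n^'n \<Rightarrow> ('n \<Rightarrow> real) \<Rightarrow> complex^'n^'n" where
  "spectral_mat U d = U ** diag_mat (\<lambda>k. of_real (d k)) ** adjoint_mat U"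

definition conj_mat :: "complex^'n^'m \<Rightarrow> complex^'n^'m" where
  "conj_mat U = (\<chi> i j. cnj (U $ i $ j))"

lemma spectral_mat_nth:
  "spectral_mat U d $ i $ j = (\<Sum>k\<in>UNIV. U $ i $ k * of_real (d k) * cnj (U $ j $ k))"
proof -
  have "(U ** diag_mat (\<lambda>k. of_real (d k))) $ i $ k = U $ i $ k * of_real (d k)" for k
    by (simp add: matrix_matrix_mult_def diag_mat_def if_distrib cong: if_cong)
  then show ?thesis
    by (simp add: spectral_mat_def matrix_matrix_mult_def adjoint_mat_def)
qed

lemma spectral_mat_diagonal_nth:
  "spectral_mat U d $ i $ i = of_real (\<Sum>k\<in>UNIV. d k * (cmod (U $ i $ k))\<^sup>2)"
proof -
  have "U $ i $ k * of_real (d k) * cnj (U $ i $ k) = of_real (d k * (cmod (U $ i $ k))\<^sup>2)" for k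
    by (metis complex_norm_square mult.commute mult.left_commute of_real_mult)
  then show ?thesis
    by (simp only: spectral_mat_nth of_real_sum)
qed

lemma spectral_mat_add: "spectral_mat U (\<lambda>k. a k + b k) = spectral_mat U a + spectral_mat U b"
  by (simp add: vec_eq_iff spectral_mat_nth sum.distrib algebra_simps)

lemma spectral_mat_diff: "spectral_mat U (\<lambda>k. a k - b k) = spectral_mat U a - spectral_mat U b"
  by (simp add: vec_eq_iff spectral_mat_nth sum_subtractf algebra_simps)

lemma spectral_mat_zero: "spectral_mat U (\<lambda>k. 0) = 0"
  by (simp add: vec_eq_iff spectral_mat_nth)

lemma spectral_mat_one:
  fixes U :: "complex^'n^'n"
  assumes "unitary U"
  shows "spectral_mat U (\<lambda>k. 1) = mat 1"
proof -
  have "diag_mat (\<lambda>k. 1) = (mat 1 :: complex^'n^'n)"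
    by (simp add: vec_eq_iff diag_mat_def mat_def)
  then have "spectral_mat U (\<lambda>k. 1) = U ** adjoint_mat U"
    by (simp add: spectral_mat_def)
  with assms show ?thesis
    by (simp add: unitary_def)
qed

lemma adjoint_mat_1: "adjoint_mat (mat 1) = mat 1"
  by (simp add: adjoint_mat_def mat_def vec_eq_iff)

lemma unitary_mat_1: "unitary (mat 1)"
  by (simp add: unitary_def adjoint_mat_1)

lemma spectral_mat_mat_1: "spectral_mat (mat 1) d = diag_mat (\<lambda>k. of_real (d k))"
  by (simp add: spectral_mat_def adjoint_mat_1)

lemma self_adjoint_spectral_mat: "self_adjoint (spectral_mat U d)"
  by (simp add: self_adjoint_def vec_eq_iff adjoint_mat_def spectral_mat_nth mult_ac)

lemma transpose_spectral_mat: "transpose (spectral_mat U d) = spectral_mat (conj_mat U) d"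
  by (simp add: vec_eq_iff transpose_def spectral_mat_nth conj_mat_def mult_ac)

lemma unitary_conj_mat:
  assumes "unitary U"
  shows "unitary (conj_mat U)"
proof -
  have "conj_mat (A ** B) = conj_mat A ** conj_mat B" for A B :: "complex^'n^'n"
    by (simp add: vec_eq_iff conj_mat_def matrix_matrix_mult_def)
  moreover have "adjoint_mat (conj_mat U) = conj_mat (adjoint_mat U)" "conj_mat (mat 1) = mat 1"
    by (simp_all add: vec_eq_iff conj_mat_def adjoint_mat_def mat_def)
  ultimately show ?thesis
    using assms by (metis unitary_def)
qed

lemma matrix_vector_mult_axis_nth: "((A::'a::semiring_1^'n^'m) *v axis r 1) $ i = A $ i $ r"
  by (simp add: matrix_vector_mult_def axis_def if_distrib cong: if_cong)

lemma matrix_eq_on_axes: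
  assumes "\<And>r. (A::'a::semiring_1^'n^'m) *v axis r 1 = B *v axis r 1"
  shows "A = B"
  using assms by (metis matrix_vector_mult_axis_nth vec_eq_iff)

lemma diag_mat_mult_vec_nth: "(diag_mat l *v u) $ r = l r * u $ r"
  by (simp add: diag_mat_def matrix_vector_mult_def if_distrib[of "\<lambda>x. x * _"] cong: if_cong)

lemma diag_mat_axis: "diag_mat l *v axis r 1 = l r *s axis r 1"
  by (simp add: vec_eq_iff diag_mat_mult_vec_nth axis_def)

lemma spectral_mat_eigenvalue:
  assumes u: "unitary U" and v: "spectral_mat U d *v v = c *s v"
    and r: "(adjoint_mat U *v v) $ r \<noteq> 0"
  shows "c = of_real (d r)"
proof -
  define w where "w = adjoint_mat U *v v"
  have "adjoint_mat U *v (spectral_mat U d *v v) = diag_mat (\<lambda>k. of_real (d k)) *v w"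
    using u by (simp add: unitary_def spectral_mat_def w_def matrix_vector_mul_assoc matrix_mul_assoc)
  then have "diag_mat (\<lambda>k. of_real (d k)) *v w = c *s w"
    by (simp add: v w_def vector_scalar_commute)
  then have "of_real (d r) * w $ r = c * w $ r"
    by (metis diag_mat_mult_vec_nth vector_smult_component)
  with r show ?thesis
    by (simp add: w_def)
qed

lemma spectral_mat_mult_column:
  assumes "unitary U"
  shows "spectral_mat U d *v (U *v axis r 1) = of_real (d r) *s (U *v axis r 1)"
proof -
  have "spectral_mat U d *v (U *v axis r 1) = U *v (diag_mat (\<lambda>k. of_real (d k)) *v axis r 1)"
    using assms
    by (simp add: unitary_def spectral_mat_def matrix_vector_mul_assoc flip: matrix_mul_assoc)
  then show ?thesis
    by (simp add: diag_mat_axis vector_scalar_commute)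
qed

lemma finite_spectrum_spectral_mat:
  assumes "unitary U"
  shows "finite (spectrum_mat (spectral_mat U d))"
proof (rule finite_subset)
  show "spectrum_mat (spectral_mat U d) \<subseteq> range (\<lambda>k. complex_of_real (d k))"
  proof
    fix c assume "c \<in> spectrum_mat (spectral_mat U d)"
    then obtain v where "v \<noteq> 0" and v: "spectral_mat U d *v v = c *s v"
      by (auto simp: spectrum_mat_def)
    then have "U *v (adjoint_mat U *v v) \<noteq> 0"
      using assms by (simp add: unitary_def matrix_vector_mul_assoc)
    then obtain r where "(adjoint_mat U *v v) $ r \<noteq> 0"
      by (metis matrix_vector_mult_0_right vec_eq_iff zero_index)
    then show "c \<in> range (\<lambda>k. complex_of_real (d k))"
      using spectral_mat_eigenvalue[OF assms v] by blast
  qed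
qed simp

lemma adjoint_mult_entry_cinner:
  "(adjoint_mat U ** U) $ k $ l = cinner (column k U) (column l U)"
  by (simp add: adjoint_mat_def matrix_matrix_mult_def cinner_def column_def)

lemma spectral_mat_orthonormal_eigenvectors:
  fixes A :: "complex^'n^'n" and V :: "'n \<Rightarrow> complex^'n"
  assumes orth: "\<And>k l. cinner (V k) (V l) = (if k = l then 1 else 0)"
    and eig: "\<And>k. A *v V k = of_real (m k) *s V k"
  obtains U where "unitary U" "A = spectral_mat U m"
proof -
  define U :: "complex^'n^'n" where "U = (\<chi> i k. V k $ i)"
  have column: "column k U = V k" for k
    by (simp add: U_def column_def vec_eq_iff)
  have uu: "adjoint_mat U ** U = mat 1"
    by (simp add: vec_eq_iff adjoint_mult_entry_cinner column orth mat_def)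
  then have uu': "U ** adjoint_mat U = mat 1"
    using matrix_left_right_inverse by blast
  have "(A ** U) $ i $ k = (U ** diag_mat (\<lambda>k. of_real (m k))) $ i $ k" for i k
  proof -
    have "(A ** U) $ i $ k = (A *v V k) $ i"
      by (simp add: matrix_matrix_mult_def matrix_vector_mult_def U_def)
    then show ?thesis
      by (simp add: eig matrix_matrix_mult_def diag_mat_def U_def if_distrib cong: if_cong)
  qed
  then have "A ** U = U ** diag_mat (\<lambda>k. of_real (m k))"
    by (simp add: vec_eq_iff)
  then have "A = spectral_mat U m"
    by (metis matrix_mul_assoc matrix_mul_rid spectral_mat_def uu')
  with uu uu' show thesis
    using that unitary_def by blast
qed

lemma exists_orthogonal_3:
  fixes a b :: "complex^3"
  obtains x where "x \<noteq> 0" "cinner a x = 0" "cinner b x = 0"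
proof -
  define M :: "complex^3^3" where
    "M = (\<chi> i j. if i = 1 then cnj (a$j) else if i = 2 then cnj (b$j) else 0)"
  have "row 3 M = 0"
    by (simp add: M_def row_def vec_eq_iff)
  then have "\<not> inj ((*v) M)"
    using det_nz_iff_inj_gen[of "(*v) M"] det_zero_row(2) by auto
  then obtain x y where xy: "x \<noteq> y" "M *v x = M *v y"
    unfolding inj_def by blast
  then have "M *v (x - y) = 0"
    by (simp add: matrix_vector_mult_diff_distrib)
  moreover have "(M *v (x - y)) $ 1 = cinner a (x - y)" "(M *v (x - y)) $ 2 = cinner b (x - y)"
    by (simp_all add: M_def matrix_vector_mult_def cinner_def)
  ultimately show thesis
    using that[of "x - y"] xy(1) by simp
qed

theorem self_adjoint_spectral_3:
  fixes A :: op3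
  assumes sa: "self_adjoint A"
  obtains U d where "unitary U" "A = spectral_mat U d"
proof -
  have "axis 1 1 \<noteq> (0::complex^3)"
    by (simp add: axis_def vec_eq_iff)
  then obtain v1 m1 where v1: "norm v1 = 1" "A *v v1 = of_real m1 *s v1"
    using self_adjoint_eigenvector_orthogonal[OF sa, of "{}"] by (metis empty_iff)
  obtain x2 where "x2 \<noteq> 0" "cinner v1 x2 = 0"
    using exists_orthogonal_3[of v1 v1] by blast
  then obtain v2 m2 where v2: "norm v2 = 1" "cinner v1 v2 = 0" "A *v v2 = of_real m2 *s v2"
    using self_adjoint_eigenvector_orthogonal[OF sa, of "{v1}" x2] v1 by auto
  obtain x3 where "x3 \<noteq> 0" "cinner v1 x3 = 0" "cinner v2 x3 = 0"
    using exists_orthogonal_3[of v1 v2] by blast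
  then obtain v3 m3 where v3: "norm v3 = 1" "cinner v1 v3 = 0 \<and> cinner v2 v3 = 0"
      "A *v v3 = of_real m3 *s v3"
    using self_adjoint_eigenvector_orthogonal[OF sa, of "{v1, v2}" x3] v1 v2 by auto
  define V where "V k = (if k = 1 then v1 else if k = 2 then v2 else v3)" for k :: 3
  define m where "m k = (if k = 1 then m1 else if k = 2 then m2 else m3)" for k :: 3
  have "cinner v2 v1 = 0" "cinner v3 v1 = 0" "cinner v3 v2 = 0"
    using v2 v3 cinner_cnj[of v1 v2] cinner_cnj[of v1 v3] cinner_cnj[of v2 v3] by simp_all
  moreover have "cinner v v = 1" if "norm v = 1" for v :: "complex^3"
    using that by (simp add: cinner_self)
  ultimately have "cinner (V k) (V l) = (if k = l then 1 else 0)" for k l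
    using exhaust_3[of k] exhaust_3[of l] v1 v2 v3 by (auto simp: V_def)
  moreover have "A *v V k = of_real (m k) *s V k" for k
    using v1 v2 v3 by (simp add: V_def m_def)
  ultimately show thesis
    using that spectral_mat_orthonormal_eigenvectors by blast
qed

section \<open>Functional calculus and tensor products\<close>

text \<open>On the eigenvector \<open>U e\<^sub>r\<close> both candidates for \<open>abs_powr\<close> must act as \<open>\<bar>d r\<bar> powr p\<close>, which
  pins down the (otherwise arbitrary) value of the \<open>THE\<close> in its definition.\<close>
lemma abs_powr_spectral_mat:
  fixes U :: "complex^'n^'n"
  assumes u: "unitary U"
  shows "abs_powr p (spectral_mat U d) = spectral_mat U (\<lambda>r. \<bar>d r\<bar> powr p)"
proof -
  define M0 where "M0 = spectral_mat U (\<lambda>r. \<bar>d r\<bar> powr p)"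
  define P where "P M \<longleftrightarrow> (\<forall>c v. spectral_mat U d *v v = c *s v \<longrightarrow>
      M *v v = complex_of_real (cmod c powr p) *s v)" for M :: "complex^'n^'n"
  have "P M0"
    unfolding P_def
  proof (intro allI impI)
    fix c v assume v: "spectral_mat U d *v v = c *s v"
    define w where "w = adjoint_mat U *v v"
    have "of_real (\<bar>d r\<bar> powr p) * w $ r = of_real (cmod c powr p) * w $ r" for r
      using spectral_mat_eigenvalue[OF u v, of r] by (cases "w $ r = 0") (auto simp: w_def)
    then have "diag_mat (\<lambda>r. of_real (\<bar>d r\<bar> powr p)) *v w = of_real (cmod c powr p) *s w"
      by (simp add: vec_eq_iff diag_mat_mult_vec_nth)
    moreover have "U *v w = v"
      using u by (simp add: unitary_def w_def matrix_vector_mul_assoc)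
    ultimately show "M0 *v v = of_real (cmod c powr p) *s v"
      by (metis M0_def spectral_mat_def matrix_vector_mul_assoc w_def vector_scalar_commute)
  qed
  moreover have "M = M0" if "P M" for M
  proof -
    have "(M ** U) *v axis r 1 = (M0 ** U) *v axis r 1" for r
      using \<open>P M\<close> \<open>P M0\<close> spectral_mat_mult_column[OF u, of d r]
      unfolding P_def by (metis matrix_vector_mul_assoc)
    then have "M ** U ** adjoint_mat U = M0 ** U ** adjoint_mat U"
      using matrix_eq_on_axes by metis
    with u show ?thesis
      by (simp add: unitary_def flip: matrix_mul_assoc)
  qed
  ultimately have "abs_powr p (spectral_mat U d) = M0"
    unfolding abs_powr_def P_def[symmetric] by (rule the_equality)
  then show ?thesis
    by (simp add: M0_def)
qed

lemma kron_mult: "kron A B ** kron C D = kron (A ** C) (B ** D)"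
proof -
  have "(kron A B ** kron C D) $ r $ s = (kron (A ** C) (B ** D)) $ r $ s" for r s
  proof -
    have "(kron A B ** kron C D) $ r $ s = (\<Sum>q\<in>UNIV \<times> UNIV.
        A $ fst r $ fst q * C $ fst q $ fst s * (B $ snd r $ snd q * D $ snd q $ snd s))"
      by (simp add: kron_def matrix_matrix_mult_def mult_ac)
    also have "\<dots> = (\<Sum>a\<in>UNIV. A $ fst r $ a * C $ a $ fst s) * (\<Sum>b\<in>UNIV. B $ snd r $ b * D $ b $ snd s)"
      by (simp add: sum.cartesian_product sum_product split_def)
    finally show ?thesis
      by (simp add: kron_def matrix_matrix_mult_def)
  qed
  then show ?thesis
    by (simp add: vec_eq_iff)
qed

lemma adjoint_kron: "adjoint_mat (kron A B) = kron (adjoint_mat A) (adjoint_mat B)"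
  by (simp add: vec_eq_iff adjoint_mat_def kron_def)

lemma kron_mat_1: "kron (mat 1) (mat 1) = mat 1"
  by (auto simp: vec_eq_iff kron_def mat_def prod_eq_iff)

lemma kron_diag_mat: "kron (diag_mat a) (diag_mat b) = diag_mat (\<lambda>q. a (fst q) * b (snd q))"
  by (auto simp: vec_eq_iff kron_def diag_mat_def prod_eq_iff)

lemma kron_spectral_mat:
  "kron (spectral_mat U a) (spectral_mat V b) = spectral_mat (kron U V) (\<lambda>q. a (fst q) * b (snd q))"
proof -
  have "diag_mat (\<lambda>q. complex_of_real (a (fst q) * b (snd q)))
      = kron (diag_mat (\<lambda>k. of_real (a k))) (diag_mat (\<lambda>k. of_real (b k)))"
    by (simp add: kron_diag_mat)
  then show ?thesis
    unfolding spectral_mat_def by (simp add: adjoint_kron kron_mult)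
qed

lemma unitary_kron: "unitary U \<Longrightarrow> unitary V \<Longrightarrow> unitary (kron U V)"
  by (simp add: unitary_def adjoint_kron kron_mult kron_mat_1)

text \<open>The transpose has the conjugate eigenbasis, so both tensor factors are diagonal in the
  product basis \<open>kron U (conj_mat U)\<close>.\<close>
lemma comm_op_spectral_mat:
  assumes u: "unitary U"
  shows "comm_op (spectral_mat U d) = spectral_mat (kron U (conj_mat U)) (\<lambda>q. d (fst q) - d (snd q))"
proof -
  have "comm_op (spectral_mat U d)
      = kron (spectral_mat U d) (spectral_mat (conj_mat U) (\<lambda>k. 1))
        - kron (spectral_mat U (\<lambda>k. 1)) (spectral_mat (conj_mat U) d)"
    using u unitary_conj_mat[OF u] by (simp add: comm_op_def spectral_mat_one transpose_spectral_mat)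
  then show ?thesis
    by (simp add: kron_spectral_mat spectral_mat_diff)
qed

lemma abs_powr_comm_op:
  assumes u: "unitary U"
  shows "abs_powr p (comm_op (spectral_mat U d))
       = spectral_mat (kron U (conj_mat U)) (\<lambda>q. \<bar>d (fst q) - d (snd q)\<bar> powr p)"
  using u by (simp add: comm_op_spectral_mat abs_powr_spectral_mat unitary_kron unitary_conj_mat)

section \<open>Inclusion\<close>

lemma C_set_zero: "0 \<in> C_set p"
  unfolding C_set_def by (intro CollectI exI[of _ "[]"]) (simp add: C_op_def)

lemma C_set_add:
  assumes "X \<in> C_set p" "Y \<in> C_set p"
  shows "X + Y \<in> C_set p"
proof -
  obtain As Bs where "X = C_op p As" "\<forall>A\<in>set As. self_adjoint A \<and> finite (spectrum_mat A)"
    "Y = C_op p Bs" "\<forall>A\<in>set Bs. self_adjoint A \<and> finite (spectrum_mat A)"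
    using assms by (auto simp: C_set_def)
  then show ?thesis
    unfolding C_set_def by (intro CollectI exI[of _ "As @ Bs"]) (auto simp: C_op_def)
qed

lemma C_set_subsetI:
  assumes "\<And>A. self_adjoint A \<Longrightarrow> abs_powr p (comm_op A) \<in> C_set p'"
  shows "C_set p \<subseteq> C_set p'"
proof
  fix X assume "X \<in> C_set p"
  then obtain As where X: "X = C_op p As" and As: "\<forall>A\<in>set As. self_adjoint A"
    by (auto simp: C_set_def)
  from As have "C_op p As \<in> C_set p'"
    by (induction As) (auto simp: C_op_def C_set_zero C_set_add assms)
  with X show "X \<in> C_set p'"
    by simp
qed

lemma spectral_mat_gap_sum_in_C_set:
  fixes U :: op3
  assumes u: "unitary U"
  shows "spectral_mat (kron U (conj_mat U))
           (\<lambda>q. sum_list (map (\<lambda>e. \<bar>e (fst q) - e (snd q)\<bar> powr p) ds)) \<in> C_set p"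
proof -
  have "C_op p (map (spectral_mat U) ds)
      = spectral_mat (kron U (conj_mat U)) (\<lambda>q. sum_list (map (\<lambda>e. \<bar>e (fst q) - e (snd q)\<bar> powr p) ds))"
    by (induction ds) (simp_all add: C_op_def abs_powr_comm_op[OF u] spectral_mat_zero
        flip: spectral_mat_add)
  moreover have "\<forall>A\<in>set (map (spectral_mat U) ds). self_adjoint A \<and> finite (spectrum_mat A)"
    by (auto simp: self_adjoint_spectral_mat finite_spectrum_spectral_mat[OF u])
  ultimately show ?thesis
    unfolding C_set_def by (intro CollectI exI[of _ "map (spectral_mat U) ds"]) auto
qed

lemma powr_add_le_add_powr:
  fixes u v q :: real
  assumes q: "0 < q" "q \<le> 1" and uv: "0 \<le> u" "0 \<le> v"
  shows "(u + v) powr q \<le> u powr q + v powr q"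
proof (cases "u + v = 0")
  case True
  with uv show ?thesis
    by simp
next
  case False
  define s where "s = u + v"
  have s: "s > 0"
    using False uv by (simp add: s_def)
  have "w / s \<le> (w / s) powr q" if "0 \<le> w" "w \<le> s" for w
  proof -
    have "(w / s) powr 1 \<le> (w / s) powr q"
      using that q s by (intro powr_mono') auto
    with that s show ?thesis
      by simp
  qed
  then have "1 \<le> (u / s) powr q + (v / s) powr q"
    using uv s add_divide_distrib[of u v s] by (smt (verit) s_def divide_self)
  also have "\<dots> = (u powr q + v powr q) / s powr q"
    using uv s by (simp add: powr_divide add_divide_distrib)
  finally show ?thesis
    using s by (simp add: s_def le_divide_eq)
qed

lemma add_powr_le_powr_add:
  fixes u v p :: real
  assumes p: "1 \<le> p" and uv: "0 \<le> u" "0 \<le> v"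
  shows "u powr p + v powr p \<le> (u + v) powr p"
proof -
  have "(u powr p + v powr p) powr (1 / p) \<le> (u powr p) powr (1 / p) + (v powr p) powr (1 / p)"
    using p by (intro powr_add_le_add_powr) auto
  also have "\<dots> = u + v"
    using p uv by (simp add: powr_powr)
  finally have "((u powr p + v powr p) powr (1 / p)) powr p \<le> (u + v) powr p"
    using p by (intro powr_mono2) auto
  then show ?thesis
    using p by (simp add: powr_powr)
qed

text \<open>The cone generated by the gap triples \<open>(\<bar>a - b\<bar>\<^sup>p, \<bar>a - c\<bar>\<^sup>p, \<bar>b - c\<bar>\<^sup>p)\<close>. If the gap triple of
  the eigenvalues of \<open>A\<close> for exponent \<open>p\<close> lies in this cone for exponent \<open>p'\<close>, then
  \<open>\<bar>A \<otimes> I - I \<otimes> A\<^sup>T\<bar>\<^sup>p\<close> is a sum of \<open>p'\<close>-th powers for observables with the eigenbasis of \<open>A\<close>.\<close>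
definition realizable :: "real \<Rightarrow> real \<Rightarrow> real \<Rightarrow> real \<Rightarrow> bool" where
  "realizable p x y z \<longleftrightarrow> (\<exists>es :: (real \<times> real \<times> real) list.
     x = sum_list (map (\<lambda>(a, b, c). \<bar>a - b\<bar> powr p) es) \<and>
     y = sum_list (map (\<lambda>(a, b, c). \<bar>a - c\<bar> powr p) es) \<and>
     z = sum_list (map (\<lambda>(a, b, c). \<bar>b - c\<bar> powr p) es))"

lemma realizable_add:
  "realizable p x y z \<Longrightarrow> realizable p x' y' z' \<Longrightarrow> realizable p (x + x') (y + y') (z + z')"
  unfolding realizable_def
  apply (elim exE)
  subgoal for es es' by (intro exI[of _ "es @ es'"]) simp
  done

lemma realizable_swap_12: "realizable p x y z \<Longrightarrow> realizable p y x z"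
  unfolding realizable_def
  apply (elim exE)
  subgoal for es
    by (intro exI[of _ "map (\<lambda>(a, b, c). (a, c, b)) es"]) (simp add: comp_def split_def abs_minus_commute)
  done

lemma realizable_swap_23: "realizable p x y z \<Longrightarrow> realizable p x z y"
  unfolding realizable_def
  apply (elim exE)
  subgoal for es
    by (intro exI[of _ "map (\<lambda>(a, b, c). (b, a, c)) es"]) (simp add: comp_def split_def abs_minus_commute)
  done

lemma realizable_degenerate:
  assumes "0 < p" "0 \<le> s"
  shows "realizable p s s 0"
  unfolding realizable_def
  using assms by (intro exI[of _ "[(s powr (1 / p), 0, 0)]"]) (simp add: powr_powr)

lemma realizable_triangle:
  assumes p: "0 < p" and "0 \<le> x" "0 \<le> y" "0 \<le> z"
    and "x \<le> y + z" "y \<le> x + z" "z \<le> x + y"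
  shows "realizable p x y z"
proof -
  have "realizable p ((x + y - z) / 2) ((x + y - z) / 2) 0"
    "realizable p ((x + z - y) / 2) 0 ((x + z - y) / 2)"
    "realizable p 0 ((y + z - x) / 2) ((y + z - x) / 2)"
    using assms realizable_degenerate[OF p] realizable_swap_23[OF realizable_degenerate[OF p]]
      realizable_swap_12[OF realizable_swap_23[OF realizable_degenerate[OF p]]] by simp_all
  then have "realizable p ((x + y - z) / 2 + (x + z - y) / 2 + 0)
      ((x + y - z) / 2 + 0 + (y + z - x) / 2) (0 + (x + z - y) / 2 + (y + z - x) / 2)"
    by (intro realizable_add)
  then show ?thesis
    by (simp add: field_simps)
qed

text \<open>Here the gap triple of \<open>(0, X, X + \<beta>)\<close> supplies \<open>x\<close>, with \<open>\<beta>\<close> chosen by the intermediate value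
  theorem so that a degenerate triple makes up the remaining two coordinates.\<close>
lemma realizable_between:
  assumes q: "0 < q" and xy: "0 \<le> x" "0 \<le> y"
    and z: "x + y \<le> z" "z \<le> (x powr (1 / q) + y powr (1 / q)) powr q"
  shows "realizable q x z y"
proof -
  define X where "X = x powr (1 / q)"
  define B where "B = y powr (1 / q)"
  have XB: "X \<ge> 0" "B \<ge> 0" "X powr q = x" "B powr q = y"
    using q xy by (simp_all add: X_def B_def powr_powr)
  define h where "h t = (X + t) powr q - t powr q" for t
  have "continuous_on {0..B} (\<lambda>t. (X + t) powr q)" "continuous_on {0..B} (\<lambda>t. t powr q)"
    by (rule continuous_on_powr'; use XB q in \<open>auto intro: continuous_intros\<close>)+
  then have "continuous_on {0..B} h"
    unfolding h_def by (rule continuous_on_diff)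
  moreover have "h 0 \<le> z - y" "z - y \<le> h B"
    using XB z by (simp_all add: h_def X_def B_def)
  ultimately obtain \<beta> where \<beta>: "0 \<le> \<beta>" "\<beta> \<le> B" "h \<beta> = z - y"
    using IVT'[of h 0 "z - y" B] XB by auto
  define s where "s = y - \<beta> powr q"
  have "\<beta> powr q \<le> B powr q"
    using \<beta> q by (intro powr_mono2) auto
  then have "\<beta> powr q \<le> y"
    using XB by simp
  then have "realizable q 0 s s"
    using realizable_swap_12[OF realizable_swap_23[OF realizable_degenerate[OF q]]] by (simp add: s_def)
  moreover have "realizable q x ((X + \<beta>) powr q) (\<beta> powr q)"
    unfolding realizable_def using XB \<beta> by (intro exI[of _ "[(0, X, X + \<beta>)]"]) simp
  ultimately have "realizable q (x + 0) ((X + \<beta>) powr q + s) (\<beta> powr q + s)"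
    by (intro realizable_add)
  moreover have "(X + \<beta>) powr q + s = z"
    using \<beta>(3) by (simp add: h_def s_def)
  ultimately show ?thesis
    by (simp add: s_def)
qed

lemma realizable_gap_powr_ordered:
  fixes a b :: real
  assumes p: "0 < p" and p': "0 < p'" and reg: "p \<le> 1 \<or> p \<le> p'" and ab: "0 \<le> a" "0 \<le> b"
  shows "realizable p' (a powr p) ((a + b) powr p) (b powr p)"
proof (cases "p \<le> 1")
  case True
  then have "(a + b) powr p \<le> a powr p + b powr p"
    using p ab by (intro powr_add_le_add_powr)
  moreover have "a powr p \<le> (a + b) powr p" "b powr p \<le> (a + b) powr p"
    using ab p by (auto intro!: powr_mono2)
  ultimately show ?thesis
    using p' ab by (intro realizable_triangle) simp_all
next
  case False
  with reg have "1 < p" "p \<le> p'"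
    by auto
  have "(a + b) powr (p / p') \<le> a powr (p / p') + b powr (p / p')"
    using p p' \<open>p \<le> p'\<close> ab by (intro powr_add_le_add_powr) auto
  then have upper: "(a + b) powr p \<le> ((a powr p) powr (1 / p') + (b powr p) powr (1 / p')) powr p'"
    using p p' ab powr_mono2[of p' "(a + b) powr (p / p')"] by (simp add: powr_powr)
  have lower: "a powr p + b powr p \<le> (a + b) powr p"
    using \<open>1 < p\<close> ab by (intro add_powr_le_powr_add) auto
  show ?thesis
    by (rule realizable_between[OF p' _ _ lower upper]) simp_all
qed

lemma realizable_gap_powr:
  fixes d1 d2 d3 :: real
  assumes p: "0 < p" and p': "0 < p'" and reg: "p \<le> 1 \<or> p \<le> p'"
  shows "realizable p' (\<bar>d1 - d2\<bar> powr p) (\<bar>d1 - d3\<bar> powr p) (\<bar>d2 - d3\<bar> powr p)"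
proof -
  define P where "P d1 d2 d3 \<longleftrightarrow>
    realizable p' (\<bar>d1 - d2\<bar> powr p) (\<bar>d1 - d3\<bar> powr p) (\<bar>d2 - d3\<bar> powr p)" for d1 d2 d3 :: real
  have sorted: "P d1 d2 d3" if "d1 \<le> d2" "d2 \<le> d3" for d1 d2 d3
    using realizable_gap_powr_ordered[OF p p' reg, of "d2 - d1" "d3 - d2"] that
    by (simp add: P_def abs_minus_commute abs_of_nonneg)
  have swap_12: "P d2 d1 d3" if "P d1 d2 d3" for d1 d2 d3
    using realizable_swap_23[of p'] that by (simp add: P_def abs_minus_commute)
  have swap_23: "P d1 d3 d2" if "P d1 d2 d3" for d1 d2 d3
    using realizable_swap_12[of p'] that by (simp add: P_def abs_minus_commute)
  have first_le_second: "P d1 d2 d3" if "d1 \<le> d2" for d1 d2 d3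
  proof -
    consider "d2 \<le> d3" | "d1 \<le> d3" "d3 \<le> d2" | "d3 \<le> d1"
      by linarith
    then show ?thesis
      by cases (use that sorted swap_12 swap_23 in blast)+
  qed
  have "P d1 d2 d3"
    using first_le_second swap_12 by (metis nle_le)
  then show ?thesis
    by (simp add: P_def)
qed

lemma spectral_mat_gap_powr_in_C_set:
  fixes U :: op3 and d :: "3 \<Rightarrow> real"
  assumes u: "unitary U"
    and r: "realizable p' (\<bar>d 1 - d 2\<bar> powr p) (\<bar>d 1 - d 3\<bar> powr p) (\<bar>d 2 - d 3\<bar> powr p)"
  shows "spectral_mat (kron U (conj_mat U)) (\<lambda>q. \<bar>d (fst q) - d (snd q)\<bar> powr p) \<in> C_set p'"
proof -
  obtain es :: "(real \<times> real \<times> real) list" where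
    es: "\<bar>d 1 - d 2\<bar> powr p = sum_list (map (\<lambda>(a, b, c). \<bar>a - b\<bar> powr p') es)"
      "\<bar>d 1 - d 3\<bar> powr p = sum_list (map (\<lambda>(a, b, c). \<bar>a - c\<bar> powr p') es)"
      "\<bar>d 2 - d 3\<bar> powr p = sum_list (map (\<lambda>(a, b, c). \<bar>b - c\<bar> powr p') es)"
    using r unfolding realizable_def by blast
  define ds where "ds = map (\<lambda>(a, b, c) (k::3). if k = 1 then a else if k = 2 then b else c) es"
  define g where "g i j = sum_list (map (\<lambda>e. \<bar>e i - e j\<bar> powr p') ds)" for i j
  have "g i j = g j i" "g i i = 0" for i j
    by (simp_all add: g_def abs_minus_commute)
  moreover have "g 1 2 = \<bar>d 1 - d 2\<bar> powr p" "g 1 3 = \<bar>d 1 - d 3\<bar> powr p"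
    "g 2 3 = \<bar>d 2 - d 3\<bar> powr p"
    by (simp_all add: g_def ds_def es comp_def split_def)
  ultimately have "\<bar>d i - d j\<bar> powr p = g i j" for i j
    using exhaust_3[of i] exhaust_3[of j] by (auto simp: abs_minus_commute)
  then show ?thesis
    using spectral_mat_gap_sum_in_C_set[OF u, of p' ds] by (simp add: g_def)
qed

lemma C_set_mono:
  assumes "0 < p" "0 < p'" "p \<le> 1 \<or> p \<le> p'"
  shows "C_set p \<subseteq> C_set p'"
proof (rule C_set_subsetI)
  fix A :: op3
  assume "self_adjoint A"
  then obtain U d where "unitary U" "A = spectral_mat U d"
    by (rule self_adjoint_spectral_3)
  then show "abs_powr p (comm_op A) \<in> C_set p'"
    using realizable_gap_powr[OF assms] by (simp add: abs_powr_comm_op spectral_mat_gap_powr_in_C_set)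
qed

section \<open>Non-inclusion\<close>

lemma powr_add_le_two_powr:
  fixes u v p :: real
  assumes p: "1 \<le> p" and uv: "0 \<le> u" "0 \<le> v"
  shows "(u + v) powr p \<le> 2 powr (p - 1) * (u powr p + v powr p)"
proof -
  have two: "1 \<le> 2 powr (p - 1)"
    using p by (simp add: ge_one_powr_ge_zero)
  consider "u = 0" | "v = 0" | "u > 0" "v > 0"
    using uv by fastforce
  then show ?thesis
  proof cases
    case 3
    have "((1 - 1 / 2) *\<^sub>R u + (1 / 2) *\<^sub>R v) powr p \<le> (1 - 1 / 2) * u powr p + (1 / 2) * v powr p"
      using 3 by (intro convex_onD[OF powr_convex[OF p]]) auto
    then have "(u + v) powr p / 2 powr p \<le> (u powr p + v powr p) / 2"
      using uv by (simp add: powr_divide field_simps)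
    moreover have "2 powr p = 2 * 2 powr (p - 1)"
      by (simp add: powr_diff)
    ultimately show ?thesis
      by (simp add: field_simps)
  qed (use two in \<open>simp_all add: mult_le_cancel_right1\<close>)
qed

definition quasi_triangle_const :: "real \<Rightarrow> real" where
  "quasi_triangle_const p = max 1 (2 powr (p - 1))"

lemma abs_diff_powr_quasi_triangle:
  fixes x y z p :: real
  assumes p: "0 < p"
  shows "\<bar>x - z\<bar> powr p \<le> quasi_triangle_const p * (\<bar>x - y\<bar> powr p + \<bar>y - z\<bar> powr p)"
proof -
  have "\<bar>x - z\<bar> powr p \<le> (\<bar>x - y\<bar> + \<bar>y - z\<bar>) powr p"
    using p by (intro powr_mono2) auto
  also have "\<dots> \<le> quasi_triangle_const p * (\<bar>x - y\<bar> powr p + \<bar>y - z\<bar> powr p)"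
  proof (cases "p \<le> 1")
    case True
    have "(\<bar>x - y\<bar> + \<bar>y - z\<bar>) powr p \<le> 1 * (\<bar>x - y\<bar> powr p + \<bar>y - z\<bar> powr p)"
      using p True by (simp add: powr_add_le_add_powr)
    also have "\<dots> \<le> quasi_triangle_const p * (\<bar>x - y\<bar> powr p + \<bar>y - z\<bar> powr p)"
      by (rule mult_right_mono) (auto simp: quasi_triangle_const_def)
    finally show ?thesis .
  next
    case False
    have "(\<bar>x - y\<bar> + \<bar>y - z\<bar>) powr p \<le> 2 powr (p - 1) * (\<bar>x - y\<bar> powr p + \<bar>y - z\<bar> powr p)"
      using False by (simp add: powr_add_le_two_powr)
    also have "\<dots> \<le> quasi_triangle_const p * (\<bar>x - y\<bar> powr p + \<bar>y - z\<bar> powr p)"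
      by (rule mult_right_mono) (auto simp: quasi_triangle_const_def)
    finally show ?thesis .
  qed
  finally show ?thesis .
qed

lemma weighted_quasi_triangle:
  fixes a b c :: "'n::finite \<Rightarrow> real" and G :: "'n \<Rightarrow> 'n \<Rightarrow> real"
  assumes nonneg: "\<And>k. a k \<ge> 0" "\<And>k. b k \<ge> 0" "\<And>k. c k \<ge> 0"
    and sum: "sum a UNIV = 1" "sum b UNIV = 1" "sum c UNIV = 1"
    and G: "\<And>k l m. G k m \<le> K * (G k l + G l m)"
  shows "(\<Sum>k\<in>UNIV. \<Sum>m\<in>UNIV. G k m * a k * c m)
     \<le> K * ((\<Sum>k\<in>UNIV. \<Sum>l\<in>UNIV. G k l * a k * b l) + (\<Sum>l\<in>UNIV. \<Sum>m\<in>UNIV. G l m * b l * c m))"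
proof -
  have "G k m * a k * c m = (\<Sum>l\<in>UNIV. G k m * a k * b l * c m)" for k m
  proof -
    have "(\<Sum>l\<in>UNIV. G k m * a k * b l * c m) = G k m * a k * c m * sum b UNIV"
      by (simp add: sum_distrib_left mult_ac)
    with sum show ?thesis
      by simp
  qed
  then have "(\<Sum>k\<in>UNIV. \<Sum>m\<in>UNIV. G k m * a k * c m)
      = (\<Sum>k\<in>UNIV. \<Sum>m\<in>UNIV. \<Sum>l\<in>UNIV. G k m * a k * b l * c m)"
    by simp
  also have "\<dots> \<le> (\<Sum>k\<in>UNIV. \<Sum>m\<in>UNIV. \<Sum>l\<in>UNIV. K * (G k l + G l m) * a k * b l * c m)"
  proof (intro sum_mono)
    fix k m l
    have "G k m * (a k * b l * c m) \<le> K * (G k l + G l m) * (a k * b l * c m)"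
      using G nonneg by (intro mult_right_mono) simp_all
    then show "G k m * a k * b l * c m \<le> K * (G k l + G l m) * a k * b l * c m"
      by (simp add: mult_ac)
  qed
  also have "\<dots> = K * ((\<Sum>k\<in>UNIV. \<Sum>m\<in>UNIV. \<Sum>l\<in>UNIV. G k l * a k * b l * c m)
                   + (\<Sum>k\<in>UNIV. \<Sum>m\<in>UNIV. \<Sum>l\<in>UNIV. G l m * a k * b l * c m))"
    by (simp add: sum_distrib_left sum.distrib algebra_simps)
  also have "(\<Sum>k\<in>UNIV. \<Sum>m\<in>UNIV. \<Sum>l\<in>UNIV. G k l * a k * b l * c m)
      = (\<Sum>k\<in>UNIV. \<Sum>l\<in>UNIV. G k l * a k * b l * sum c UNIV)"
    by (subst sum.swap[of _ UNIV UNIV]) (simp add: sum_distrib_left)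
  also have "(\<Sum>k\<in>UNIV. \<Sum>m\<in>UNIV. \<Sum>l\<in>UNIV. G l m * a k * b l * c m)
      = (\<Sum>l\<in>UNIV. \<Sum>m\<in>UNIV. G l m * b l * c m * sum a UNIV)"
  proof -
    have "(\<Sum>k\<in>UNIV. \<Sum>m\<in>UNIV. \<Sum>l\<in>UNIV. G l m * a k * b l * c m)
        = (\<Sum>m\<in>UNIV. \<Sum>l\<in>UNIV. \<Sum>k\<in>UNIV. G l m * a k * b l * c m)"
      by (subst sum.swap) (rule sum.cong[OF refl], rule sum.swap)
    also have "\<dots> = (\<Sum>m\<in>UNIV. \<Sum>l\<in>UNIV. G l m * b l * c m * sum a UNIV)"
      by (simp add: sum_distrib_left mult_ac)
    finally show ?thesis
      by (subst sum.swap) simp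
  qed
  finally show ?thesis
    using sum by simp
qed

lemma unitary_row_norm_sum:
  assumes "unitary U"
  shows "(\<Sum>k\<in>UNIV. (cmod (U $ i $ k))\<^sup>2) = 1"
proof -
  have "spectral_mat U (\<lambda>k. 1) $ i $ i = 1"
    using assms by (simp add: spectral_mat_one mat_def)
  then have "complex_of_real (\<Sum>k\<in>UNIV. 1 * (cmod (U $ i $ k))\<^sup>2) = 1"
    by (simp only: spectral_mat_diagonal_nth)
  then show ?thesis
    by (simp only: mult_1 of_real_eq_1_iff)
qed

lemma spectral_mat_kron_conj_diagonal_nth:
  "Re (spectral_mat (kron U (conj_mat U)) g $ (i, j) $ (i, j))
     = (\<Sum>k\<in>UNIV. \<Sum>l\<in>UNIV. g (k, l) * (cmod (U $ i $ k))\<^sup>2 * (cmod (U $ j $ l))\<^sup>2)"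
proof -
  have "Re (spectral_mat (kron U (conj_mat U)) g $ (i, j) $ (i, j))
      = (\<Sum>q\<in>UNIV \<times> UNIV. g q * (cmod (U $ i $ fst q))\<^sup>2 * (cmod (U $ j $ snd q))\<^sup>2)"
    by (simp add: spectral_mat_diagonal_nth kron_def conj_mat_def norm_mult power_mult_distrib mult_ac)
  then show ?thesis
    by (simp add: sum.cartesian_product split_def)
qed

text \<open>A linear functional that is nonpositive on \<open>C_set p\<close> by the quasi-triangle inequality for
  \<open>\<bar>x - y\<bar> powr p\<close>, yet positive on a single \<open>\<bar>A \<otimes> I - I \<otimes> A\<^sup>T\<bar>\<close> raised to a power
  \<open>p' > max 1 p\<close>.\<close>
definition quasi_triangle_defect :: "real \<Rightarrow> op33 \<Rightarrow> real" where
  "quasi_triangle_defect p X = Re (X $ (1, 3) $ (1, 3))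
     - quasi_triangle_const p * (Re (X $ (1, 2) $ (1, 2)) + Re (X $ (2, 3) $ (2, 3)))"

lemma quasi_triangle_defect_add:
  "quasi_triangle_defect p (X + Y) = quasi_triangle_defect p X + quasi_triangle_defect p Y"
  by (simp add: quasi_triangle_defect_def algebra_simps)

lemma quasi_triangle_defect_abs_powr_comm_op:
  fixes U :: op3
  assumes u: "unitary U" and p: "0 < p"
  shows "quasi_triangle_defect p (abs_powr p (comm_op (spectral_mat U d))) \<le> 0"
proof -
  have "(\<Sum>k\<in>UNIV. \<Sum>m\<in>UNIV. \<bar>d k - d m\<bar> powr p * (cmod (U $ 1 $ k))\<^sup>2 * (cmod (U $ 3 $ m))\<^sup>2)
     \<le> quasi_triangle_const p *
        ((\<Sum>k\<in>UNIV. \<Sum>l\<in>UNIV. \<bar>d k - d l\<bar> powr p * (cmod (U $ 1 $ k))\<^sup>2 * (cmod (U $ 2 $ l))\<^sup>2)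
         + (\<Sum>l\<in>UNIV. \<Sum>m\<in>UNIV. \<bar>d l - d m\<bar> powr p * (cmod (U $ 2 $ l))\<^sup>2 * (cmod (U $ 3 $ m))\<^sup>2))"
    using u p by (intro weighted_quasi_triangle abs_diff_powr_quasi_triangle) (simp_all add: unitary_row_norm_sum)
  then show ?thesis
    by (simp add: quasi_triangle_defect_def abs_powr_comm_op[OF u] spectral_mat_kron_conj_diagonal_nth)
qed

lemma quasi_triangle_defect_nonpos:
  assumes p: "0 < p" and X: "X \<in> C_set p"
  shows "quasi_triangle_defect p X \<le> 0"
proof -
  obtain As where X: "X = C_op p As" and As: "\<forall>A\<in>set As. self_adjoint A"
    using X by (auto simp: C_set_def)
  have "quasi_triangle_defect p (abs_powr p (comm_op A)) \<le> 0" if "self_adjoint A" for A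
    using that by (metis self_adjoint_spectral_3 quasi_triangle_defect_abs_powr_comm_op p)
  with As have "quasi_triangle_defect p (C_op p As) \<le> 0"
  proof (induction As)
    case Nil
    then show ?case
      by (simp add: C_op_def quasi_triangle_defect_def)
  next
    case (Cons A As)
    then show ?case
      by (fastforce simp: C_op_def quasi_triangle_defect_add intro: add_nonpos_nonpos)
  qed
  with X show ?thesis
    by simp
qed

lemma C_set_not_subset:
  assumes p: "0 < p" "p < p'" and p': "1 < p'"
  shows "\<not> C_set p' \<subseteq> C_set p"
proof
  assume sub: "C_set p' \<subseteq> C_set p"
  define d :: "3 \<Rightarrow> real" where "d k = (if k = 1 then 0 else if k = 2 then 1 else 2)" for k
  define X where "X = C_op p' [spectral_mat (mat 1) d]"
  have "X \<in> C_set p'"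
    unfolding C_set_def X_def
    by (auto simp: self_adjoint_spectral_mat finite_spectrum_spectral_mat[OF unitary_mat_1])
  with sub have "quasi_triangle_defect p X \<le> 0"
    using quasi_triangle_defect_nonpos[OF p(1)] by blast
  moreover have "conj_mat (mat 1 :: op3) = mat 1"
    by (simp add: conj_mat_def mat_def vec_eq_iff)
  then have "X = spectral_mat (mat 1) (\<lambda>q. \<bar>d (fst q) - d (snd q)\<bar> powr p')"
    by (simp add: X_def C_op_def abs_powr_comm_op[OF unitary_mat_1] kron_mat_1)
  then have "quasi_triangle_defect p X = 2 powr p' - quasi_triangle_const p * 2"
    by (simp add: quasi_triangle_defect_def spectral_mat_mat_1 diag_mat_def d_def)
  moreover have "quasi_triangle_const p * 2 < 2 powr p'"
  proof -
    have "2 powr 1 < (2::real) powr p'"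
      using p' by (simp only: powr_less_cancel_iff)
    moreover have "2 * 2 powr (p - 1) = (2::real) powr p" "(2::real) powr p < 2 powr p'"
      using p by (simp_all add: powr_diff)
    ultimately show ?thesis
      unfolding quasi_triangle_const_def by (simp add: max_def del: powr_less_cancel_iff)
  qed
  ultimately show False
    by simp
qed

theorem corollary4p11:
  shows "(\<forall>p p'. 0 < p \<and> p \<le> 1 \<and> 0 < p' \<and> p' \<le> 1 \<longrightarrow> C_set p = C_set p') \<and>
         (\<forall>p p'. 1 < p' \<and> 0 < p \<and> p < p' \<longrightarrow> C_set p \<subseteq> C_set p' \<and> \<not> (C_set p' \<subseteq> C_set p))"
proof (rule conjI; intro allI impI)
  fix p p' :: real
  assume "0 < p \<and> p \<le> 1 \<and> 0 < p' \<and> p' \<le> 1"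
  then show "C_set p = C_set p'"
    using C_set_mono[of p p'] C_set_mono[of p' p] by auto
next
  fix p p' :: real
  assume "1 < p' \<and> 0 < p \<and> p < p'"
  then show "C_set p \<subseteq> C_set p' \<and> \<not> C_set p' \<subseteq> C_set p"
    using C_set_mono[of p p'] C_set_not_subset[of p p'] by auto
qed

end
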